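(* Let $Q\in\mathbb R^{n\times n}$ be symmetric positive semidefinite, $b_0,\ldots,b_p\in\mathbb R^n$, $d_0,\ldots,d_p\in\mathbb R$, $-\infty\le l_i\le u_i\le+\infty$, $f_i(x)=x^TQx+2b_i^Tx+d_i$, and consider \[ ({\rm UQ})\quad \max_{x}\ f_0(x)\quad\text{s.t.}\quad l_i\le f_i(x)\le u_i,\ i=1,\ldots,p, \] \[ ({\rm SOCP})\quad \max_{x,t}\ t+2b_0^Tx+d_0\quad\text{s.t.}\quad l_i\le t+2b_i^Tx+d_i\le u_i,\ i=1,\ldots,p,\quad \left\|\begin{pmatrix}Q^{1/2}x\\ \frac{t-1}{2}\end{pmatrix}\right\|\le\frac{t+1}{2}. \] Suppose ${\rm rank}[b_1,\ldots,b_p]\le{\rm rank}(Q)-1$. Then (UQ) is equivalent to (SOCP) in the sense that $x^*$ globally solves (UQ) if and only if $(x^*,t^* ):=(x^*,x^{*T}Qx^* )$ globally solves (SOCP).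
   Context: $Q^{1/2}$ is the positive semidefinite square root of $Q$; $\|\cdot\|$ is the Euclidean norm. *)

theory Defs
  imports "HOL-Analysis.Analysis" "HOL-Library.Extended_Real"
begin

definition sym_psd :: "real^'n^'n \<Rightarrow> bool" where
  "sym_psd A \<longleftrightarrow> transpose A = A \<and> (\<forall>x. x \<bullet> (A *v x) \<ge> 0)"

definition is_psd_sqrt :: "real^'n^'n \<Rightarrow> real^'n^'n \<Rightarrow> bool" where
  "is_psd_sqrt S Q \<longleftrightarrow> sym_psd S \<and> S ** S = Q"

definition qf :: "real^'n^'n \<Rightarrow> (nat \<Rightarrow> real^'n) \<Rightarrow> (nat \<Rightarrow> real) \<Rightarrow> nat \<Rightarrow> real^'n \<Rightarrow> real" where
  "qf Q b d i x = x \<bullet> (Q *v x) + 2 * (b i \<bullet> x) + d i"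

definition UQ_feasible where
  "UQ_feasible Q b d l u p x \<longleftrightarrow>
     (\<forall>i\<in>{1..p}. l i \<le> ereal (qf Q b d i x) \<and> ereal (qf Q b d i x) \<le> u i)"

definition UQ_global_sol where
  "UQ_global_sol Q b d l u p xs \<longleftrightarrow> UQ_feasible Q b d l u p xs \<and>
     (\<forall>x. UQ_feasible Q b d l u p x \<longrightarrow> qf Q b d 0 x \<le> qf Q b d 0 xs)"

definition SOCP_obj :: "(nat \<Rightarrow> real^'n) \<Rightarrow> (nat \<Rightarrow> real) \<Rightarrow> nat \<Rightarrow> real^'n \<Rightarrow> real \<Rightarrow> real" where
  "SOCP_obj b d i x t = t + 2 * (b i \<bullet> x) + d i"

definition SOCP_feasible where
  "SOCP_feasible S b d l u p x t \<longleftrightarrow>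
     (\<forall>i\<in>{1..p}. l i \<le> ereal (SOCP_obj b d i x t) \<and> ereal (SOCP_obj b d i x t) \<le> u i) \<and>
     norm (S *v x, (t - 1) / 2) \<le> (t + 1) / 2"

definition SOCP_global_sol where
  "SOCP_global_sol S b d l u p xs ts \<longleftrightarrow> SOCP_feasible S b d l u p xs ts \<and>
     (\<forall>x t. SOCP_feasible S b d l u p x t \<longrightarrow> SOCP_obj b d 0 x t \<le> SOCP_obj b d 0 xs ts)"

end

theory Submission
  imports Defs
begin

text \<open>
  The cone constraint says exactly \<open>t \<ge> \<parallel>Q\<^sup>1\<^sup>/\<^sup>2 x\<parallel>\<^sup>2 = x\<^sup>T Q x\<close>, so (SOCP) is the relaxation of (UQ)
  in which the equality \<open>t = x\<^sup>T Q x\<close> is weakened to an inequality, so the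
  optimal value of (SOCP) is at least that of (UQ). Conversely, the rank condition
  gives a direction \<open>v\<close> orthogonal to all \<open>b\<^sub>1, \<dots>, b\<^sub>p\<close> with \<open>v\<^sup>T Q v > 0\<close>.
  Moving a feasible \<open>(x, t)\<close> along \<open>\<pm>v\<close> until \<open>x\<^sup>T Q x = t\<close> leaves every
  constraint value \<open>t + 2 b\<^sub>i\<^sup>T x + d\<^sub>i\<close> unchanged and does not decrease the
  objective, which produces a point of (UQ) that is at least as good.
\<close>

definition SOCP_linear_feasible ::
    "(nat \<Rightarrow> real^'n) \<Rightarrow> (nat \<Rightarrow> real) \<Rightarrow> (nat \<Rightarrow> ereal) \<Rightarrow> (nat \<Rightarrow> ereal) \<Rightarrow> nat
      \<Rightarrow> real^'n \<Rightarrow> real \<Rightarrow> bool" where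
  "SOCP_linear_feasible b d l u p x t \<longleftrightarrow>
     (\<forall>i\<in>{1..p}. l i \<le> ereal (SOCP_obj b d i x t) \<and> ereal (SOCP_obj b d i x t) \<le> u i)"

lemma inner_matrix_vector_symmetric:
  fixes A :: "real^'n^'n"
  assumes "transpose A = A"
  shows "x \<bullet> (A *v y) = (A *v x) \<bullet> y"
proof -
  have "x \<bullet> (A *v y) = (x v* A) \<bullet> y" by (simp add: dot_lmul_matrix)
  also have "x v* A = A *v x" using vector_transpose_matrix[of x A] assms by simp
  finally show ?thesis .
qed

lemma quadratic_form_eq_norm_sqrt:
  fixes Q S :: "real^'n^'n"
  assumes "is_psd_sqrt S Q"
  shows "x \<bullet> (Q *v x) = (norm (S *v x))\<^sup>2"
proof -
  have tS: "transpose S = S" and SS: "S ** S = Q"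
    using assms by (auto simp: is_psd_sqrt_def sym_psd_def)
  have "x \<bullet> (Q *v x) = x \<bullet> (S *v (S *v x))" by (simp add: matrix_vector_mul_assoc SS)
  also have "\<dots> = (S *v x) \<bullet> (S *v x)" using inner_matrix_vector_symmetric[OF tS] by simp
  finally show ?thesis by (simp add: power2_norm_eq_inner)
qed

lemma quadratic_form_pos_if_image_nonzero:
  fixes Q S :: "real^'n^'n"
  assumes "is_psd_sqrt S Q" and "Q *v v \<noteq> 0"
  shows "v \<bullet> (Q *v v) > 0"
proof -
  have "S ** S = Q" using assms(1) by (simp add: is_psd_sqrt_def)
  then have "S *v (S *v v) \<noteq> 0" using assms(2) by (simp add: matrix_vector_mul_assoc)
  then have "S *v v \<noteq> 0" by auto
  then show ?thesis using quadratic_form_eq_norm_sqrt[OF assms(1)] by simp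
qed

lemma quadratic_form_add_scaled:
  fixes Q :: "real^'n^'n"
  assumes "transpose Q = Q"
  shows "(x + s *\<^sub>R v) \<bullet> (Q *v (x + s *\<^sub>R v))
           = x \<bullet> (Q *v x) + 2 * s * (v \<bullet> (Q *v x)) + s\<^sup>2 * (v \<bullet> (Q *v v))"
proof -
  have "x \<bullet> (Q *v v) = v \<bullet> (Q *v x)"
    using inner_matrix_vector_symmetric[OF assms, of x v] by (simp add: inner_commute)
  then show ?thesis
    by (simp add: matrix_vector_right_distrib matrix_vector_mult_scaleR inner_add_left
        inner_add_right power2_eq_square algebra_simps)
qed

lemma second_order_cone_iff:
  fixes z :: "'a::real_normed_vector" and t :: real
  shows "norm (z, (t - 1) / 2) \<le> (t + 1) / 2 \<longleftrightarrow> (norm z)\<^sup>2 \<le> t"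
proof -
  have norm_eq: "norm (z, (t - 1) / 2) = sqrt ((norm z)\<^sup>2 + ((t - 1) / 2)\<^sup>2)"
    by (simp add: norm_Pair power_divide)
  have squares: "(norm z)\<^sup>2 + ((t - 1) / 2)\<^sup>2 \<le> ((t + 1) / 2)\<^sup>2 \<longleftrightarrow> (norm z)\<^sup>2 \<le> t"
    by (simp add: power2_eq_square field_simps)
  show ?thesis
  proof
    assume "norm (z, (t - 1) / 2) \<le> (t + 1) / 2"
    then show "(norm z)\<^sup>2 \<le> t" unfolding norm_eq squares[symmetric] by (rule sqrt_le_D)
  next
    assume le: "(norm z)\<^sup>2 \<le> t"
    then have "0 \<le> t" using zero_le_power2 order_trans by blast
    then have "0 \<le> (t + 1) / 2" by simp
    then show "norm (z, (t - 1) / 2) \<le> (t + 1) / 2"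
      unfolding norm_eq using le squares by (blast intro: real_le_lsqrt)
  qed
qed

lemma SOCP_feasible_iff:
  fixes Q S :: "real^'n^'n"
  assumes "is_psd_sqrt S Q"
  shows "SOCP_feasible S b d l u p x t \<longleftrightarrow>
           SOCP_linear_feasible b d l u p x t \<and> x \<bullet> (Q *v x) \<le> t"
  unfolding SOCP_feasible_def SOCP_linear_feasible_def second_order_cone_iff
    quadratic_form_eq_norm_sqrt[OF assms] ..

lemma qf_eq_SOCP_obj: "qf Q b d i x = SOCP_obj b d i x (x \<bullet> (Q *v x))"
  by (simp add: qf_def SOCP_obj_def)

lemma UQ_feasible_iff: "UQ_feasible Q b d l u p x \<longleftrightarrow>
    SOCP_linear_feasible b d l u p x (x \<bullet> (Q *v x))"
  by (simp add: UQ_feasible_def SOCP_linear_feasible_def qf_eq_SOCP_obj)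

lemma UQ_feasible_iff_SOCP_feasible:
  assumes "is_psd_sqrt S Q"
  shows "UQ_feasible Q b d l u p x \<longleftrightarrow> SOCP_feasible S b d l u p x (x \<bullet> (Q *v x))"
  by (simp add: SOCP_feasible_iff[OF assms] UQ_feasible_iff)

text \<open>Dimension count: \<open>B\<^sup>\<bottom>\<close> has dimension \<open>n - dim B > n - rank Q = dim (ker Q)\<close>,
  so it is not contained in \<open>ker Q\<close>, which for symmetric \<open>Q\<close> is \<open>(range Q)\<^sup>\<bottom>\<close>.\<close>
lemma exists_orthogonal_not_in_kernel:
  fixes Q :: "real^'n^'n" and B :: "(real^'n) set"
  assumes "transpose Q = Q" and "dim B < rank Q"
  obtains v where "\<forall>b\<in>B. b \<bullet> v = 0" and "Q *v v \<noteq> 0"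
proof -
  let ?W = "{y. \<forall>x\<in>span B. orthogonal x y}"
  let ?R = "range (\<lambda>x. Q *v x)"
  let ?K = "{y. \<forall>x\<in>?R. orthogonal x y}"
  have dim_W: "dim ?W + dim (span B) = dim (UNIV :: (real^'n) set)"
    using dim_subspace_orthogonal_to_vectors[of "span B" UNIV] by simp
  have "subspace ?R"
    by (rule linear_subspace_image) (auto intro: matrix_vector_mul_linear)
  then have dim_K: "dim ?K + dim ?R = dim (UNIV :: (real^'n) set)"
    using dim_subspace_orthogonal_to_vectors[of ?R UNIV] by simp
  have "\<not> ?W \<subseteq> ?K"
  proof
    assume "?W \<subseteq> ?K"
    then have "dim ?W \<le> dim ?K" by (rule dim_subset)
    then show False using dim_W dim_K assms(2) by (simp add: rank_dim_range dim_span)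
  qed
  then obtain v w where v: "v \<in> ?W" and "(Q *v w) \<bullet> v \<noteq> 0"
    by (auto simp: orthogonal_def)
  then have "w \<bullet> (Q *v v) \<noteq> 0" using inner_matrix_vector_symmetric[OF assms(1)] by simp
  then have "Q *v v \<noteq> 0" by auto
  moreover have "\<forall>b\<in>B. b \<bullet> v = 0" using v by (auto simp: orthogonal_def span_base)
  ultimately show ?thesis using that by blast
qed

lemma quadratic_has_nonneg_root:
  fixes a c q t :: real
  assumes "a > 0" and "q \<le> t"
  shows "\<exists>s\<ge>0. q + 2 * s * c + s\<^sup>2 * a = t"
proof -
  define r where "r = sqrt (c\<^sup>2 + a * (t - q))"
  have disc: "0 \<le> c\<^sup>2 + a * (t - q)" using assms by simp
  then have r_sq: "r\<^sup>2 = c\<^sup>2 + a * (t - q)" and "r \<ge> 0" by (simp_all add: r_def)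
  have "\<bar>c\<bar> \<le> r"
    unfolding r_def real_sqrt_abs[symmetric] using assms by (intro real_sqrt_le_mono) simp
  then have "c \<le> r" by linarith
  define s where "s = (r - c) / a"
  have "s \<ge> 0" using \<open>c \<le> r\<close> assms(1) by (simp add: s_def)
  moreover have "r = c + s * a" using assms(1) by (simp add: s_def)
  then have "a * (2 * s * c + s\<^sup>2 * a) = a * (t - q)"
    using r_sq by (simp add: power2_eq_square algebra_simps)
  then have "q + 2 * s * c + s\<^sup>2 * a = t" using assms(1) by simp
  ultimately show ?thesis by blast
qed

lemma quadratic_form_reaches_level:
  fixes Q :: "real^'n^'n"
  assumes "transpose Q = Q" and "v \<bullet> (Q *v v) > 0" and "x \<bullet> (Q *v x) \<le> t"
  obtains s where "s \<ge> 0" and "(x + s *\<^sub>R v) \<bullet> (Q *v (x + s *\<^sub>R v)) = t"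
  using quadratic_has_nonneg_root[OF assms(2,3), of "v \<bullet> (Q *v x)"] that
  by (auto simp: quadratic_form_add_scaled[OF assms(1)])

lemma SOCP_feasible_lifts_to_UQ:
  fixes Q S :: "real^'n^'n" and b :: "nat \<Rightarrow> real^'n"
  assumes "sym_psd Q" and "is_psd_sqrt S Q"
    and "dim (b ` {1..p}) + 1 \<le> rank Q"
    and "SOCP_feasible S b d l u p x t"
  obtains y where "UQ_feasible Q b d l u p y" and "SOCP_obj b d 0 x t \<le> qf Q b d 0 y"
proof -
  have Q_sym: "transpose Q = Q" using assms(1) by (simp add: sym_psd_def)
  obtain w where w_orth: "\<forall>i\<in>{1..p}. b i \<bullet> w = 0" and "Q *v w \<noteq> 0"
    using exists_orthogonal_not_in_kernel[OF Q_sym, of "b ` {1..p}"] assms(3) by auto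
  define v where "v = (if b 0 \<bullet> w \<ge> 0 then w else - w)"
  have v_orth: "\<forall>i\<in>{1..p}. b i \<bullet> v = 0" and "b 0 \<bullet> v \<ge> 0"
    using w_orth by (auto simp: v_def)
  have "Q *v v \<noteq> 0"
    using \<open>Q *v w \<noteq> 0\<close> matrix_vector_mult_diff_distrib[of Q 0 w] by (auto simp: v_def)
  then have "v \<bullet> (Q *v v) > 0" by (rule quadratic_form_pos_if_image_nonzero[OF assms(2)])
  moreover have lin: "SOCP_linear_feasible b d l u p x t" and "x \<bullet> (Q *v x) \<le> t"
    using assms(4) by (simp_all add: SOCP_feasible_iff[OF assms(2)])
  ultimately obtain s where "s \<ge> 0" and "(x + s *\<^sub>R v) \<bullet> (Q *v (x + s *\<^sub>R v)) = t"
    using quadratic_form_reaches_level[OF Q_sym] by blast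
  define y where "y = x + s *\<^sub>R v"
  have level: "y \<bullet> (Q *v y) = t" using \<open>_ = t\<close> by (simp add: y_def)
  have obj_y: "SOCP_obj b d i y t = SOCP_obj b d i x t + 2 * s * (b i \<bullet> v)" for i
    by (simp add: y_def SOCP_obj_def inner_add_right algebra_simps)
  have "UQ_feasible Q b d l u p y"
    using lin v_orth by (simp add: UQ_feasible_iff level SOCP_linear_feasible_def obj_y)
  moreover have "SOCP_obj b d 0 x t \<le> qf Q b d 0 y"
    using \<open>s \<ge> 0\<close> \<open>b 0 \<bullet> v \<ge> 0\<close> by (simp add: qf_eq_SOCP_obj level obj_y)
  ultimately show ?thesis using that by blast
qed

theorem corollary4:
  fixes Q S :: "real^'n^'n" and b :: "nat \<Rightarrow> real^'n" and d :: "nat \<Rightarrow> real"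
    and l u :: "nat \<Rightarrow> ereal" and p :: nat and xs :: "real^'n"
  assumes "sym_psd Q"
    and "is_psd_sqrt S Q"
    and "\<forall>i\<in>{1..p}. l i \<le> u i"
    and "dim (b ` {1..p}) + 1 \<le> rank Q"
  shows "UQ_global_sol Q b d l u p xs \<longleftrightarrow> SOCP_global_sol S b d l u p xs (xs \<bullet> (Q *v xs))"
proof
  assume opt: "UQ_global_sol Q b d l u p xs"
  have "SOCP_obj b d 0 x t \<le> SOCP_obj b d 0 xs (xs \<bullet> (Q *v xs))"
    if feasible: "SOCP_feasible S b d l u p x t" for x t
  proof -
    obtain y where "UQ_feasible Q b d l u p y" and "SOCP_obj b d 0 x t \<le> qf Q b d 0 y"
      using SOCP_feasible_lifts_to_UQ[OF assms(1,2,4) feasible] .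
    then show ?thesis using opt by (fastforce simp: UQ_global_sol_def qf_eq_SOCP_obj)
  qed
  then show "SOCP_global_sol S b d l u p xs (xs \<bullet> (Q *v xs))"
    using opt by (simp add: SOCP_global_sol_def UQ_global_sol_def
        flip: UQ_feasible_iff_SOCP_feasible[OF assms(2)])
next
  assume "SOCP_global_sol S b d l u p xs (xs \<bullet> (Q *v xs))"
  then show "UQ_global_sol Q b d l u p xs"
    by (simp add: SOCP_global_sol_def UQ_global_sol_def qf_eq_SOCP_obj
        UQ_feasible_iff_SOCP_feasible[OF assms(2)])
qed

end
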